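(* Let $N\ge 1$, let $\boldsymbol{\theta}_1,\dots,\boldsymbol{\theta}_N\in\mathbb{R}^d$, and let $\boldsymbol{C}\in\mathbb{R}^{N\times N}$ be the squared Euclidean distance matrix $\boldsymbol{C}(r,s)=\|\boldsymbol{\theta}_r-\boldsymbol{\theta}_s\|_2^2$. Fix $\varepsilon>0$, $\alpha>0$, $\boldsymbol{a}\in\mathbb{R}^N\setminus\{\boldsymbol{0}\}$ and $\boldsymbol{\zeta}\in\Delta^{N-1}$. Let $\boldsymbol{\Phi}(\boldsymbol{\mu}):=\langle \boldsymbol{a},\boldsymbol{\mu}\rangle$ for $\boldsymbol{\mu}\in\Delta^{N-1}$, and let $\boldsymbol{\Gamma}:=\exp(-\boldsymbol{C}/(2\varepsilon))$ (entrywise exponential). Then the entropy-regularized Wasserstein proximal operator $$\mathrm{prox}^{W_\varepsilon}_{\frac{1}{\alpha}\boldsymbol{\Phi}}(\boldsymbol{\zeta}) := \underset{\boldsymbol{\mu}\in\Delta^{N-1}}{\arg\inf}\left\{\min_{\boldsymbol{M}\in\Pi_N(\boldsymbol{\mu},\boldsymbol{\zeta})}\left\langle \tfrac12\boldsymbol{C}+\varepsilon\log\boldsymbol{M},\,\boldsymbol{M}\right\rangle+\frac{1}{\alpha}\boldsymbol{\Phi}(\boldsymbol{\mu})\right\}$$ is given by $$\mathrm{prox}^{W_\varepsilon}_{\frac{1}{\alpha}\boldsymbol{\Phi}}(\boldsymbol{\zeta}) = \exp\!\left(-\tfrac{1}{\alpha\varepsilon}\boldsymbol{a}\right)\odot\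left(\boldsymbol{\Gamma}^{\top}\left(\boldsymbol{\zeta}\oslash\left(\boldsymbol{\Gamma}\exp\!\left(-\tfrac{1}{\alpha\varepsilon}\boldsymbol{a}\right)\right)\right)\right).$$
   Context: $\Delta^{N-1}:=\{\boldsymbol{x}\in\mathbb{R}^N:\boldsymbol{x}\ge\boldsymbol{0},\ \boldsymbol{1}^\top\boldsymbol{x}=1\}$ is the probability simplex. For $\boldsymbol{\xi},\boldsymbol{\eta}\in\Delta^{N-1}$, $\Pi_N(\boldsymbol{\xi},\boldsymbol{\eta}):=\{\boldsymbol{M}\in\mathbb{R}^{N\times N}: \boldsymbol{M}\ge\boldsymbol{0}\text{ entrywise},\ \boldsymbol{M}\boldsymbol{1}=\boldsymbol{\xi},\ \boldsymbol{M}^\top\boldsymbol{1}=\boldsymbol{\eta}\}$, where $\boldsymbol{1}$ is the all-ones vector. For matrices, $\langle \boldsymbol{A},\boldsymbol{B}\rangle=\sum_{r,s}\boldsymbol{A}(r,s)\boldsymbol{B}(r,s)$; $\log\boldsymbol{M}$ and $\exp(\cdot)$ act entrywise, with the convention $0\log 0=0$. The symbols $\odot$ and $\oslash$ denote entrywise (Hadamard) multiplication and division of vectors. *)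

theory Defs
  imports "HOL-Analysis.Analysis"
begin

text \<open>Vectors in R^N are functions on a finite index type 'n (so N = CARD('n) \<ge> 1);
  N x N matrices are functions 'n \<Rightarrow> 'n \<Rightarrow> real.\<close>

definition prob_simplex :: "('n::finite \<Rightarrow> real) set" where
  "prob_simplex = {x. (\<forall>i. x i \<ge> 0) \<and> (\<Sum>i\<in>UNIV. x i) = 1}"

definition couplings :: "('n::finite \<Rightarrow> real) \<Rightarrow> ('n \<Rightarrow> real) \<Rightarrow> ('n \<Rightarrow> 'n \<Rightarrow> real) set" where
  "couplings \<xi> \<eta> = {M. (\<forall>r s. M r s \<ge> 0) \<and> (\<forall>r. (\<Sum>s\<in>UNIV. M r s) = \<xi> r)
                        \<and> (\<forall>s. (\<Sum>r\<in>UNIV. M r s) = \<eta> s)}"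

text \<open>\<langle>C/2 + \<epsilon> log M, M\<rangle>; since ln 0 = 0 in Isabelle, 0 log 0 = 0 holds.\<close>
definition ent_cost :: "('n::finite \<Rightarrow> 'n \<Rightarrow> real) \<Rightarrow> real \<Rightarrow> ('n \<Rightarrow> 'n \<Rightarrow> real) \<Rightarrow> real" where
  "ent_cost C \<epsilon> M = (\<Sum>r\<in>UNIV. \<Sum>s\<in>UNIV. (C r s / 2 + \<epsilon> * ln (M r s)) * M r s)"

definition prox_objective ::
  "('n::finite \<Rightarrow> 'n \<Rightarrow> real) \<Rightarrow> real \<Rightarrow> real \<Rightarrow> ('n \<Rightarrow> real) \<Rightarrow> ('n \<Rightarrow> real) \<Rightarrow> ('n \<Rightarrow> real) \<Rightarrow> real" where
  "prox_objective C \<epsilon> \<alpha> a \<zeta> \<mu> =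
     Inf (ent_cost C \<epsilon> ` couplings \<mu> \<zeta>) + (1 / \<alpha>) * (\<Sum>i\<in>UNIV. a i * \<mu> i)"

text \<open>The arg inf, as the set of minimizers over the prob_simplex.\<close>
definition prox_W ::
  "('n::finite \<Rightarrow> 'n \<Rightarrow> real) \<Rightarrow> real \<Rightarrow> real \<Rightarrow> ('n \<Rightarrow> real) \<Rightarrow> ('n \<Rightarrow> real) \<Rightarrow> ('n \<Rightarrow> real) set" where
  "prox_W C \<epsilon> \<alpha> a \<zeta> = {\<mu> \<in> prob_simplex. \<forall>\<nu> \<in> prob_simplex.
      prox_objective C \<epsilon> \<alpha> a \<zeta> \<mu> \<le> prox_objective C \<epsilon> \<alpha> a \<zeta> \<nu>}"

end

theory Submission
  imports Defs
begin

text \<open>For a fixed marginal \<mu>, the objective of any coupling M \<in> \<Pi>(\<mu>, \<zeta>) equals a constant plus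
  \<epsilon> times the generalised Kullback-Leibler divergence of M from the Gibbs coupling
  Q(r,s) = \<zeta>(s) \<Gamma>(r,s) K(r) / (\<Sum>t. \<Gamma>(t,s) K(t)), whose first marginal is the claimed
  minimiser \<mu>'. The divergence dominates a quarter of the squared Euclidean distance, so the
  objective at \<mu> is at least its value at \<mu>' plus a positive multiple of the squared distance
  from \<mu> to \<mu>'; this settles existence and uniqueness of the minimiser at once, without any
  compactness argument.\<close>

definition gen_kl :: "real \<Rightarrow> real \<Rightarrow> real" where
  "gen_kl p q = p * ln p - p * ln q - p + q"

lemma gen_kl_self [simp]: "gen_kl p p = 0"
  by (simp add: gen_kl_def)

lemma sq_diff_le_gen_kl:
  fixes p q :: real
  assumes "0 \<le> p" "p \<le> 1" "0 \<le> q" "q \<le> 1" and "q = 0 \<Longrightarrow> p = 0"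
  shows "(p - q)\<^sup>2 \<le> 4 * gen_kl p q"
proof (cases "p = 0")
  case True
  have "q * q \<le> 4 * q" using assms by (intro mult_right_mono) auto
  then show ?thesis using True by (simp add: gen_kl_def power2_eq_square)
next
  case False
  with assms have p: "p > 0" and q: "q > 0" by (auto simp: less_le)
  define u v where "u = sqrt p" and "v = sqrt q"
  have u: "u > 0" "u\<^sup>2 = p" "u \<le> 1" and v: "v > 0" "v\<^sup>2 = q" "v \<le> 1"
    using p q assms by (auto simp: u_def v_def)
  have "ln (v / u) \<le> v / u - 1" using u v by (intro ln_le_minus_one) auto
  then have "u\<^sup>2 * (ln v - ln u) \<le> u\<^sup>2 * (v / u - 1)"
    using u v by (intro mult_left_mono) (auto simp: ln_div)
  also have "\<dots> = u * v - u\<^sup>2" using u(1) by (simp add: power2_eq_square field_simps)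
  finally have "(u - v)\<^sup>2 \<le> gen_kl p q"
    using u v unfolding gen_kl_def u(2)[symmetric] v(2)[symmetric]
    by (simp add: ln_realpow power2_diff algebra_simps)
  have "(u + v)\<^sup>2 \<le> 2\<^sup>2" using u v by (intro power_mono) auto
  then have "(u - v)\<^sup>2 * (u + v)\<^sup>2 \<le> (u - v)\<^sup>2 * 4"
    by (intro mult_left_mono) auto
  moreover have "(p - q)\<^sup>2 = (u - v)\<^sup>2 * (u + v)\<^sup>2"
    unfolding u(2)[symmetric] v(2)[symmetric] by (simp add: power2_eq_square algebra_simps)
  ultimately show ?thesis using \<open>(u - v)\<^sup>2 \<le> gen_kl p q\<close> by simp
qed

lemma prob_simplex_le_one:
  assumes "x \<in> prob_simplex" shows "x i \<le> 1"
proof -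
  have "x i \<le> (\<Sum>j\<in>UNIV. x j)"
    using assms by (intro member_le_sum) (auto simp: prob_simplex_def)
  then show ?thesis using assms by (simp add: prob_simplex_def)
qed

lemma coupling_nonneg: "M \<in> couplings \<mu> \<zeta> \<Longrightarrow> 0 \<le> M r s"
  by (simp add: couplings_def)

lemma coupling_le_second_marginal:
  assumes "M \<in> couplings \<mu> \<zeta>" shows "M r s \<le> \<zeta> s"
proof -
  have "M r s \<le> (\<Sum>t\<in>UNIV. M t s)"
    using assms by (intro member_le_sum) (auto simp: couplings_def)
  then show ?thesis using assms by (simp add: couplings_def)
qed

lemma product_in_couplings:
  assumes "\<mu> \<in> prob_simplex" "\<zeta> \<in> prob_simplex"
  shows "(\<lambda>r s. \<mu> r * \<zeta> s) \<in> couplings \<mu> \<zeta>"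
  using assms by (simp add: couplings_def prob_simplex_def
      sum_distrib_left[symmetric] sum_distrib_right[symmetric])

lemma sum_sq_row_sums_le:
  fixes M Q :: "'n::finite \<Rightarrow> 'n \<Rightarrow> real"
  shows "(\<Sum>r\<in>UNIV. ((\<Sum>s\<in>UNIV. M r s) - (\<Sum>s\<in>UNIV. Q r s))\<^sup>2)
    \<le> real CARD('n) * (\<Sum>r\<in>UNIV. \<Sum>s\<in>UNIV. (M r s - Q r s)\<^sup>2)"
proof -
  have "(\<Sum>r\<in>UNIV. ((\<Sum>s\<in>UNIV. M r s) - (\<Sum>s\<in>UNIV. Q r s))\<^sup>2)
      \<le> (\<Sum>r\<in>UNIV. (\<Sum>s\<in>UNIV. (M r s - Q r s)\<^sup>2) * real CARD('n))"
    unfolding sum_subtractf[symmetric] using sum_squared_le_sum_of_squares by (intro sum_mono) blast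
  then show ?thesis by (simp add: sum_distrib_left mult.commute)
qed

locale entropic_prox =
  fixes C :: "'n::finite \<Rightarrow> 'n \<Rightarrow> real" and \<epsilon> \<alpha> :: real and a \<zeta> :: "'n \<Rightarrow> real"
  assumes eps_pos: "\<epsilon> > 0" and alpha_nz: "\<alpha> \<noteq> 0" and zeta_simplex: "\<zeta> \<in> prob_simplex"
begin

definition gibbs :: "'n \<Rightarrow> 'n \<Rightarrow> real" where
  "gibbs r s = exp (- C r s / (2 * \<epsilon>)) * exp (- a r / (\<alpha> * \<epsilon>))"

definition gibbs_coupling :: "'n \<Rightarrow> 'n \<Rightarrow> real" where
  "gibbs_coupling r s = \<zeta> s * gibbs r s / (\<Sum>t\<in>UNIV. gibbs t s)"

definition prox_point :: "'n \<Rightarrow> real" where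
  "prox_point r = (\<Sum>s\<in>UNIV. gibbs_coupling r s)"

definition prox_value :: real where
  "prox_value = (\<Sum>s\<in>UNIV. \<epsilon> * (ln (\<zeta> s) - ln (\<Sum>t\<in>UNIV. gibbs t s)) * \<zeta> s)"

lemma gibbs_pos: "gibbs r s > 0"
  by (simp add: gibbs_def)

lemma gibbs_column_sum_pos: "(\<Sum>t\<in>UNIV. gibbs t s) > 0"
  using gibbs_pos by (intro sum_pos) auto

lemma zeta_nonneg: "\<zeta> s \<ge> 0"
  using zeta_simplex by (simp add: prob_simplex_def)

lemma gibbs_coupling_nonneg: "gibbs_coupling r s \<ge> 0"
  using zeta_nonneg gibbs_pos gibbs_column_sum_pos
  by (simp add: gibbs_coupling_def less_imp_le)

lemma gibbs_coupling_column_sum: "(\<Sum>r\<in>UNIV. gibbs_coupling r s) = \<zeta> s"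
  using gibbs_column_sum_pos[of s]
  by (simp add: gibbs_coupling_def sum_distrib_left[symmetric] sum_divide_distrib[symmetric])

lemma gibbs_coupling_in_couplings: "gibbs_coupling \<in> couplings prox_point \<zeta>"
  unfolding couplings_def
  using gibbs_coupling_nonneg gibbs_coupling_column_sum by (simp add: prox_point_def)

lemma prox_point_in_simplex: "prox_point \<in> prob_simplex"
proof -
  have "(\<Sum>r\<in>UNIV. prox_point r) = 1"
    using zeta_simplex unfolding prox_point_def
    by (subst sum.swap) (simp add: gibbs_coupling_column_sum prob_simplex_def)
  then show ?thesis
    using gibbs_coupling_nonneg by (simp add: prob_simplex_def prox_point_def sum_nonneg)
qed

lemma gibbs_coupling_eq_zero_iff: "gibbs_coupling r s = 0 \<longleftrightarrow> \<zeta> s = 0"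
  using gibbs_pos[of r s] gibbs_column_sum_pos[of s] by (simp add: gibbs_coupling_def)

text \<open>In a column with \<zeta>(s) = 0 both M and Q vanish, and ln 0 = 0 makes both sides zero.\<close>
lemma cost_entry_decomposition:
  assumes M: "M \<in> couplings \<mu> \<zeta>"
  shows "(C r s / 2 + \<epsilon> * ln (M r s)) * M r s + (1 / \<alpha>) * (a r * M r s)
    = \<epsilon> * (ln (\<zeta> s) - ln (\<Sum>t\<in>UNIV. gibbs t s)) * M r s
      + \<epsilon> * (M r s - gibbs_coupling r s) + \<epsilon> * gen_kl (M r s) (gibbs_coupling r s)"
proof (cases "\<zeta> s = 0")
  case True
  then have "M r s = 0" "gibbs_coupling r s = 0"
    using coupling_nonneg[OF M, of r s] coupling_le_second_marginal[OF M, of r s]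
    by (simp_all add: gibbs_coupling_eq_zero_iff)
  then show ?thesis by (simp add: gen_kl_def)
next
  case False
  then have ln_gibbs: "ln (gibbs_coupling r s)
      = ln (\<zeta> s) - C r s / (2 * \<epsilon>) - a r / (\<alpha> * \<epsilon>) - ln (\<Sum>t\<in>UNIV. gibbs t s)"
    using zeta_nonneg[of s] gibbs_column_sum_pos[of s]
    by (simp add: gibbs_coupling_def ln_div ln_mult gibbs_def)
  show ?thesis
    unfolding gen_kl_def ln_gibbs using eps_pos alpha_nz by (simp add: field_simps)
qed

lemma cost_decomposition:
  assumes M: "M \<in> couplings \<mu> \<zeta>"
  shows "ent_cost C \<epsilon> M + (1 / \<alpha>) * (\<Sum>i\<in>UNIV. a i * \<mu> i)
    = prox_value + \<epsilon> * (\<Sum>r\<in>UNIV. \<Sum>s\<in>UNIV. gen_kl (M r s) (gibbs_coupling r s))"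
proof -
  let ?Z = "\<lambda>s. \<Sum>t\<in>UNIV. gibbs t s"
  have rows: "\<mu> r = (\<Sum>s\<in>UNIV. M r s)" and cols: "(\<Sum>r\<in>UNIV. M r s) = \<zeta> s" for r s
    using M by (simp_all add: couplings_def)
  have "ent_cost C \<epsilon> M + (1 / \<alpha>) * (\<Sum>i\<in>UNIV. a i * \<mu> i)
      = (\<Sum>r\<in>UNIV. \<Sum>s\<in>UNIV. (C r s / 2 + \<epsilon> * ln (M r s)) * M r s + (1 / \<alpha>) * (a r * M r s))"
    unfolding ent_cost_def rows by (simp add: sum.distrib sum_distrib_left)
  also have "\<dots> = (\<Sum>r\<in>UNIV. \<Sum>s\<in>UNIV. \<epsilon> * (ln (\<zeta> s) - ln (?Z s)) * M r s)
        + (\<Sum>r\<in>UNIV. \<Sum>s\<in>UNIV. \<epsilon> * (M r s - gibbs_coupling r s))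
        + (\<Sum>r\<in>UNIV. \<Sum>s\<in>UNIV. \<epsilon> * gen_kl (M r s) (gibbs_coupling r s))"
    by (simp only: cost_entry_decomposition[OF M] sum.distrib)
  also have "(\<Sum>r\<in>UNIV. \<Sum>s\<in>UNIV. \<epsilon> * (ln (\<zeta> s) - ln (?Z s)) * M r s) = prox_value"
    unfolding prox_value_def by (subst sum.swap) (simp add: sum_distrib_left[symmetric] cols)
  also have "(\<Sum>r\<in>UNIV. \<Sum>s\<in>UNIV. \<epsilon> * (M r s - gibbs_coupling r s)) = 0"
    by (subst sum.swap)
      (simp add: sum_distrib_left[symmetric] sum_subtractf cols gibbs_coupling_column_sum)
  finally show ?thesis by (simp add: sum_distrib_left)
qed

lemma cost_at_gibbs_coupling:
  "ent_cost C \<epsilon> gibbs_coupling + (1 / \<alpha>) * (\<Sum>i\<in>UNIV. a i * prox_point i) = prox_value"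
  using cost_decomposition[OF gibbs_coupling_in_couplings] by simp

lemma cost_lower_bound:
  assumes M: "M \<in> couplings \<mu> \<zeta>"
  shows "prox_value + \<epsilon> / (4 * CARD('n)) * (\<Sum>r\<in>UNIV. (\<mu> r - prox_point r)\<^sup>2)
    \<le> ent_cost C \<epsilon> M + (1 / \<alpha>) * (\<Sum>i\<in>UNIV. a i * \<mu> i)"
proof -
  let ?Q = gibbs_coupling
  let ?KL = "\<Sum>r\<in>UNIV. \<Sum>s\<in>UNIV. gen_kl (M r s) (?Q r s)"
  have "(M r s - ?Q r s)\<^sup>2 \<le> 4 * gen_kl (M r s) (?Q r s)" for r s
  proof (rule sq_diff_le_gen_kl)
    have "\<zeta> s \<le> 1" by (rule prob_simplex_le_one[OF zeta_simplex])
    then show "M r s \<le> 1" "?Q r s \<le> 1"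
      using coupling_le_second_marginal[OF M, of r s]
        coupling_le_second_marginal[OF gibbs_coupling_in_couplings, of r s] by linarith+
    show "?Q r s = 0 \<Longrightarrow> M r s = 0"
      using coupling_nonneg[OF M, of r s] coupling_le_second_marginal[OF M, of r s]
      by (simp add: gibbs_coupling_eq_zero_iff)
  qed (simp_all add: coupling_nonneg[OF M] gibbs_coupling_nonneg)
  then have kl_bound: "(\<Sum>r\<in>UNIV. \<Sum>s\<in>UNIV. (M r s - ?Q r s)\<^sup>2) \<le> 4 * ?KL"
    by (simp add: sum_distrib_left sum_mono)
  have "(\<Sum>r\<in>UNIV. (\<mu> r - prox_point r)\<^sup>2)
      \<le> real CARD('n) * (\<Sum>r\<in>UNIV. \<Sum>s\<in>UNIV. (M r s - ?Q r s)\<^sup>2)"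
    using M sum_sq_row_sums_le[of M ?Q] by (simp add: couplings_def prox_point_def)
  also have "\<dots> \<le> real CARD('n) * (4 * ?KL)"
    using kl_bound by (intro mult_left_mono) auto
  finally have "(\<Sum>r\<in>UNIV. (\<mu> r - prox_point r)\<^sup>2) \<le> real CARD('n) * (4 * ?KL)" .
  then have "\<epsilon> / (4 * CARD('n)) * (\<Sum>r\<in>UNIV. (\<mu> r - prox_point r)\<^sup>2) \<le> \<epsilon> * ?KL"
    using eps_pos by (simp add: field_simps)
  then show ?thesis using cost_decomposition[OF M] by simp
qed

lemma distance_term_nonneg: "0 \<le> \<epsilon> / (4 * CARD('n)) * (\<Sum>r\<in>UNIV. (\<mu> r - prox_point r)\<^sup>2)"
  using eps_pos by (simp add: sum_nonneg)

lemma prox_objective_lower_bound: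
  assumes "\<mu> \<in> prob_simplex"
  shows "prox_value + \<epsilon> / (4 * CARD('n)) * (\<Sum>r\<in>UNIV. (\<mu> r - prox_point r)\<^sup>2)
    \<le> prox_objective C \<epsilon> \<alpha> a \<zeta> \<mu>"
proof -
  have "couplings \<mu> \<zeta> \<noteq> {}" using product_in_couplings[OF assms zeta_simplex] by blast
  then have "prox_value + \<epsilon> / (4 * CARD('n)) * (\<Sum>r\<in>UNIV. (\<mu> r - prox_point r)\<^sup>2)
      - (1 / \<alpha>) * (\<Sum>i\<in>UNIV. a i * \<mu> i) \<le> Inf (ent_cost C \<epsilon> ` couplings \<mu> \<zeta>)"
    using cost_lower_bound by (intro cInf_greatest) fastforce+
  then show ?thesis unfolding prox_objective_def by simp
qed

lemma prox_objective_at_prox_point: "prox_objective C \<epsilon> \<alpha> a \<zeta> prox_point \<le> prox_value"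
proof -
  have "bdd_below (ent_cost C \<epsilon> ` couplings prox_point \<zeta>)"
  proof (rule bdd_belowI2)
    fix M assume "M \<in> couplings prox_point \<zeta>"
    then show "prox_value - (1 / \<alpha>) * (\<Sum>i\<in>UNIV. a i * prox_point i) \<le> ent_cost C \<epsilon> M"
      using cost_lower_bound distance_term_nonneg[of prox_point] by fastforce
  qed
  then have "Inf (ent_cost C \<epsilon> ` couplings prox_point \<zeta>) \<le> ent_cost C \<epsilon> gibbs_coupling"
    using gibbs_coupling_in_couplings by (intro cInf_lower) auto
  then show ?thesis using cost_at_gibbs_coupling unfolding prox_objective_def by simp
qed

theorem prox_W_eq_singleton: "prox_W C \<epsilon> \<alpha> a \<zeta> = {prox_point}"
proof (intro equalityI subsetI)
  fix \<mu> assume "\<mu> \<in> prox_W C \<epsilon> \<alpha> a \<zeta>"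
  then have \<mu>: "\<mu> \<in> prob_simplex"
    and "prox_objective C \<epsilon> \<alpha> a \<zeta> \<mu> \<le> prox_objective C \<epsilon> \<alpha> a \<zeta> prox_point"
    using prox_point_in_simplex by (auto simp: prox_W_def)
  then have "\<epsilon> / (4 * CARD('n)) * (\<Sum>r\<in>UNIV. (\<mu> r - prox_point r)\<^sup>2) \<le> 0"
    using prox_objective_lower_bound[OF \<mu>] prox_objective_at_prox_point by simp
  then have "(\<Sum>r\<in>UNIV. (\<mu> r - prox_point r)\<^sup>2) = 0"
    using eps_pos by (simp add: divide_le_0_iff mult_le_0_iff sum_nonneg order.antisym)
  then have "\<mu> = prox_point" by (simp add: sum_nonneg_eq_0_iff fun_eq_iff)
  then show "\<mu> \<in> {prox_point}" by simp
next
  fix \<mu> assume "\<mu> \<in> {prox_point}"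
  moreover have "prox_objective C \<epsilon> \<alpha> a \<zeta> prox_point \<le> prox_objective C \<epsilon> \<alpha> a \<zeta> \<nu>"
    if "\<nu> \<in> prob_simplex" for \<nu>
    using prox_objective_lower_bound[OF that] prox_objective_at_prox_point distance_term_nonneg[of \<nu>]
    by linarith
  ultimately show "\<mu> \<in> prox_W C \<epsilon> \<alpha> a \<zeta>"
    using prox_point_in_simplex by (simp add: prox_W_def)
qed

end

theorem theorem1:
  fixes \<theta> :: "'n::finite \<Rightarrow> real ^ 'd"
    and C \<Gamma> :: "'n \<Rightarrow> 'n \<Rightarrow> real"
    and \<epsilon> \<alpha> :: real
    and a \<zeta> K :: "'n \<Rightarrow> real"
  assumes C_def: "\<And>r s. C r s = (norm (\<theta> r - \<theta> s))\<^sup>2"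
    and eps: "\<epsilon> > 0" and alpha: "\<alpha> > 0"
    and a_nz: "a \<noteq> (\<lambda>_. 0)"
    and zeta: "\<zeta> \<in> prob_simplex"
    and Gamma_def: "\<And>r s. \<Gamma> r s = exp (- C r s / (2 * \<epsilon>))"
    and K_def: "\<And>i. K i = exp (- a i / (\<alpha> * \<epsilon>))"
  shows "prox_W C \<epsilon> \<alpha> a \<zeta> =
    {\<lambda>r. K r * (\<Sum>s\<in>UNIV. \<Gamma> s r * (\<zeta> s / (\<Sum>t\<in>UNIV. \<Gamma> s t * K t)))}"
proof -
  interpret entropic_prox C \<epsilon> \<alpha> a \<zeta>
    using eps alpha zeta by unfold_locales auto
  have \<Gamma>_sym: "\<Gamma> r s = \<Gamma> s r" for r s by (simp add: Gamma_def C_def norm_minus_commute)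
  have "gibbs r s = \<Gamma> s r * K r" for r s
    using \<Gamma>_sym by (simp add: gibbs_def Gamma_def K_def)
  then have "prox_point = (\<lambda>r. K r * (\<Sum>s\<in>UNIV. \<Gamma> s r * (\<zeta> s / (\<Sum>t\<in>UNIV. \<Gamma> s t * K t))))"
    unfolding prox_point_def gibbs_coupling_def by (simp add: fun_eq_iff sum_distrib_left mult_ac)
  then show ?thesis using prox_W_eq_singleton by simp
qed

end
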